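(* Let $T$ be a non-abelian finite simple group whose Schur multiplier has order $1$ or $2$. Let $G$ be a strictly $T$-solvable group such that $\overline{\Gamma}(G)$ has at least one edge with both endpoints in $\pi(T)$, and suppose $G$ has a normal series $1\unlhd N\unlhd M\unlhd G$ with $N$ solvable, $M/N\cong T$, and $G/M$ isomorphic to a subgroup of $\operatorname{Out}(T)$. Then for all $s\in\pi(T)$ and $p\in\pi(G)\setminus\pi(\operatorname{Aut}(T))$, if $s-p\in\overline{\Gamma}(G)$ then $s-p\in\overline{\Gamma}(M)$.
   Context: All groups are finite. $\pi(G)$ is the set of prime divisors of $|G|$; $\overline{\Gamma}(G)$ is the graph on $\pi(G)$ where distinct $p,q$ are adjacent iff $G$ has no element of order $pq$. A group is strictly $T$-solvable if all composition factors are abelian or isomorphic to $T$ and at least one is isomorphic to $T$. *)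

theory Defs
  imports "HOL-Algebra.Algebra" Complex_Main
begin

definition prime_divs :: "('a, 'b) monoid_scheme \<Rightarrow> nat set" where
  "prime_divs G = {p. Factorial_Ring.prime p \<and> p dvd order G}"

definition ngraph_edge :: "('a, 'b) monoid_scheme \<Rightarrow> nat \<Rightarrow> nat \<Rightarrow> bool" where
  "ngraph_edge G p q \<longleftrightarrow> p \<in> prime_divs G \<and> q \<in> prime_divs G \<and> p \<noteq> q \<and>
     \<not> (\<exists>x \<in> carrier G. group.ord G x = p * q)"

definition inner_auto :: "('a, 'b) monoid_scheme \<Rightarrow> 'a \<Rightarrow> ('a \<Rightarrow> 'a)" where
  "inner_auto G g = (\<lambda>x \<in> carrier G. g \<otimes>\<^bsub>G\<^esub> x \<otimes>\<^bsub>G\<^esub> inv\<^bsub>G\<^esub> g)"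

definition Inn :: "('a, 'b) monoid_scheme \<Rightarrow> ('a \<Rightarrow> 'a) set" where
  "Inn G = inner_auto G ` carrier G"

definition OutGroup :: "('a, 'b) monoid_scheme \<Rightarrow> ('a \<Rightarrow> 'a) set monoid" where
  "OutGroup G = AutoGroup G Mod Inn G"

definition cocycle2 :: "('a, 'b) monoid_scheme \<Rightarrow> ('a \<Rightarrow> 'a \<Rightarrow> complex) \<Rightarrow> bool" where
  "cocycle2 G f \<longleftrightarrow>
     (\<forall>x y. (x \<notin> carrier G \<or> y \<notin> carrier G) \<longrightarrow> f x y = 1) \<and>
     (\<forall>x \<in> carrier G. \<forall>y \<in> carrier G. f x y \<noteq> 0) \<and>
     (\<forall>x \<in> carrier G. \<forall>y \<in> carrier G. \<forall>z \<in> carrier G.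
        f x y * f (x \<otimes>\<^bsub>G\<^esub> y) z = f y z * f x (y \<otimes>\<^bsub>G\<^esub> z))"

definition cohomologous :: "('a, 'b) monoid_scheme \<Rightarrow> (('a \<Rightarrow> 'a \<Rightarrow> complex) \<times> ('a \<Rightarrow> 'a \<Rightarrow> complex)) set" where
  "cohomologous G = {(f, g). cocycle2 G f \<and> cocycle2 G g \<and>
     (\<exists>c. (\<forall>x \<in> carrier G. c x \<noteq> 0) \<and>
        (\<forall>x \<in> carrier G. \<forall>y \<in> carrier G. f x y = g x y * (c x * c y / c (x \<otimes>\<^bsub>G\<^esub> y))))}"

definition schur_multiplier_order :: "('a, 'b) monoid_scheme \<Rightarrow> nat" where
  "schur_multiplier_order G = card ({f. cocycle2 G f} // cohomologous G)"

definition composition_series :: "('a, 'b) monoid_scheme \<Rightarrow> 'a set list \<Rightarrow> bool" where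
  "composition_series G Hs \<longleftrightarrow> Hs \<noteq> [] \<and> hd Hs = {\<one>\<^bsub>G\<^esub>} \<and> last Hs = carrier G \<and>
     (\<forall>i < length Hs. subgroup (Hs ! i) G) \<and>
     (\<forall>i. Suc i < length Hs \<longrightarrow>
        Hs ! i \<lhd> G\<lparr>carrier := Hs ! Suc i\<rparr> \<and>
        simple_group (G\<lparr>carrier := Hs ! Suc i\<rparr> Mod (Hs ! i)))"

definition comp_factor :: "('a, 'b) monoid_scheme \<Rightarrow> 'a set list \<Rightarrow> nat \<Rightarrow> 'a set monoid" where
  "comp_factor G Hs i = G\<lparr>carrier := Hs ! Suc i\<rparr> Mod (Hs ! i)"

definition strictly_solvable_over ::
  "('c, 'd) monoid_scheme \<Rightarrow> ('a, 'b) monoid_scheme \<Rightarrow> bool" where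
  "strictly_solvable_over T G \<longleftrightarrow> group G \<and> finite (carrier G) \<and>
     (\<exists>Hs. composition_series G Hs \<and>
        (\<forall>i. Suc i < length Hs \<longrightarrow> comm_group (comp_factor G Hs i) \<or> comp_factor G Hs i \<cong> T) \<and>
        (\<exists>i. Suc i < length Hs \<and> comp_factor G Hs i \<cong> T))"

end

theory Submission imports Defs begin

text \<open>Only the orders along the series \<open>N \<unlhd> M \<unlhd> G\<close> matter. Every prime of
  \<open>T \<cong> M/N\<close> divides \<open>|M|\<close>. Since \<open>G/M\<close> embeds in \<open>Out(T)\<close>, whose order divides \<open>|Aut(T)|\<close>,
  a prime \<open>p\<close> of \<open>G\<close> outside \<open>\<pi>(Aut(T))\<close> does not divide \<open>|G/M|\<close>, so by Lagrange it divides
  \<open>|M|\<close>. Hence \<open>s, p \<in> \<pi>(M)\<close>, and an element of order \<open>sp\<close> in \<open>M\<close> would be one in \<open>G\<close>.\<close>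

lemma prime_divs_subset_of_dvd:
  assumes "order H dvd order G"
  shows "prime_divs H \<subseteq> prime_divs G"
  using assms dvd_trans unfolding prime_divs_def by blast

lemma prime_divs_iso:
  assumes "G \<cong> H"
  shows "prime_divs G = prime_divs H"
  using iso_same_card[OF assms] by (simp add: prime_divs_def order_def)

lemma (in group) order_FactGroup_mult_card:
  assumes "subgroup H G"
  shows "order (G Mod H) * card H = order G"
  using lagrange[OF assms] by (simp add: FactGroup_def order_def)

lemma (in group) prime_divs_subgroup_subset:
  assumes "subgroup H G"
  shows "prime_divs (G\<lparr>carrier := H\<rparr>) \<subseteq> prime_divs G"
proof (rule prime_divs_subset_of_dvd)
  have "card H dvd order (G Mod H) * card H"
    by (rule dvd_triv_right)
  then show "order (G\<lparr>carrier := H\<rparr>) dvd order G"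
    by (simp add: order_FactGroup_mult_card[OF assms]) (simp add: order_def)
qed

lemma (in group) prime_divs_FactGroup_subset:
  assumes "subgroup H G"
  shows "prime_divs (G Mod H) \<subseteq> prime_divs G"
proof (rule prime_divs_subset_of_dvd)
  have "order (G Mod H) dvd order (G Mod H) * card H"
    by (rule dvd_triv_left)
  then show "order (G Mod H) dvd order G"
    by (simp add: order_FactGroup_mult_card[OF assms])
qed

lemma (in group) prime_divs_subset_subgroup_Un_FactGroup:
  assumes "subgroup H G"
  shows "prime_divs G \<subseteq> prime_divs (G\<lparr>carrier := H\<rparr>) \<union> prime_divs (G Mod H)"
proof
  fix p assume "p \<in> prime_divs G"
  then have p: "Factorial_Ring.prime p" and "p dvd order (G Mod H) * card H"
    by (simp_all add: prime_divs_def order_FactGroup_mult_card[OF assms])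
  then have "p dvd order (G Mod H) \<or> p dvd order (G\<lparr>carrier := H\<rparr>)"
    by (simp add: prime_dvd_mult_iff) (simp add: order_def)
  then show "p \<in> prime_divs (G\<lparr>carrier := H\<rparr>) \<union> prime_divs (G Mod H)"
    using p by (auto simp: prime_divs_def)
qed

lemma (in group) ord_subgroup:
  assumes "subgroup H G"
  shows "group.ord (G\<lparr>carrier := H\<rparr>) x = group.ord G x"
  using group.ord_def[OF subgroup_imp_group[OF assms]] ord_def
  by (simp add: nat_pow_consistent[symmetric])

lemma (in group) ngraph_edge_subgroup:
  assumes "subgroup H G" and "ngraph_edge G p q"
    and "p \<in> prime_divs (G\<lparr>carrier := H\<rparr>)" and "q \<in> prime_divs (G\<lparr>carrier := H\<rparr>)"
  shows "ngraph_edge (G\<lparr>carrier := H\<rparr>) p q"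
  using assms ord_subgroup[OF assms(1)] subgroup.subset[OF assms(1)]
  unfolding ngraph_edge_def by auto

lemma mult_AutoGroup:
  assumes "f \<in> auto G" and "h \<in> auto G"
  shows "f \<otimes>\<^bsub>AutoGroup G\<^esub> h = compose (carrier G) f h"
  using assms by (simp add: AutoGroup_def BijGroup_def auto_def)

lemma (in group) inner_auto_in_auto:
  assumes "g \<in> carrier G"
  shows "inner_auto G g \<in> auto G"
proof -
  have "bij_betw (inner_auto G g) (carrier G) (carrier G)"
    using conjugation_is_bij[OF assms] by (simp add: inner_auto_def)
  moreover have "inner_auto G g \<in> hom G G"
    unfolding hom_def inner_auto_def using assms
    by (auto simp: m_assoc) (simp add: m_assoc[symmetric])
  ultimately show ?thesis
    unfolding auto_def Bij_def inner_auto_def by auto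
qed

lemma (in group) subgroup_Inn: "subgroup (Inn G) (AutoGroup G)"
proof -
  have "group_hom G (BijGroup (carrier G)) (inner_auto G)"
    using conjugation_is_hom group_BijGroup is_group
    by (simp add: group_hom_def group_hom_axioms_def inner_auto_def[abs_def])
  then have "subgroup (Inn G) (BijGroup (carrier G))"
    using group_hom.img_is_subgroup by (fastforce simp: Inn_def)
  moreover have "Inn G \<subseteq> auto G"
    using inner_auto_in_auto by (auto simp: Inn_def)
  ultimately show ?thesis
    using group.subgroup_incl[OF group_BijGroup _ subgroup_auto] unfolding AutoGroup_def
    by blast
qed

lemma (in group) compose_inner_auto:
  assumes "a \<in> hom G G" and "g \<in> carrier G"
  shows "compose (carrier G) a (inner_auto G g) = compose (carrier G) (inner_auto G (a g)) a"
proof -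
  interpret group_hom G G a
    using assms(1) by (simp add: group_hom_def group_hom_axioms_def is_group)
  show ?thesis
    using assms(2) by (auto simp: compose_def inner_auto_def hom_mult hom_inv)
qed

lemma (in group) normal_Inn: "Inn G \<lhd> AutoGroup G"
proof -
  interpret A: group "AutoGroup G" by (rule AutoGroup)
  show ?thesis
  proof (subst A.normal_inv_iff, intro conjI ballI)
    fix a h assume a: "a \<in> carrier (AutoGroup G)" and "h \<in> Inn G"
    then obtain g where g: "g \<in> carrier G" and h: "h = inner_auto G g"
      by (auto simp: Inn_def)
    have aut: "a \<in> auto G" and "a \<in> hom G G" and "a g \<in> carrier G"
      using a g by (auto simp: AutoGroup_def auto_def hom_def)
    then have "a \<otimes>\<^bsub>AutoGroup G\<^esub> h = inner_auto G (a g) \<otimes>\<^bsub>AutoGroup G\<^esub> a"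
      using compose_inner_auto[of a g] g
      by (simp add: h mult_AutoGroup[OF aut] mult_AutoGroup[OF _ aut] inner_auto_in_auto)
    moreover have "inner_auto G (a g) \<in> carrier (AutoGroup G)"
      using \<open>a g \<in> carrier G\<close> inner_auto_in_auto by (simp add: AutoGroup_def)
    ultimately have "a \<otimes>\<^bsub>AutoGroup G\<^esub> h \<otimes>\<^bsub>AutoGroup G\<^esub> inv\<^bsub>AutoGroup G\<^esub> a = inner_auto G (a g)"
      using a by (simp add: A.m_assoc)
    then show "a \<otimes>\<^bsub>AutoGroup G\<^esub> h \<otimes>\<^bsub>AutoGroup G\<^esub> inv\<^bsub>AutoGroup G\<^esub> a \<in> Inn G"
      using \<open>a g \<in> carrier G\<close> by (simp add: Inn_def)
  qed (rule subgroup_Inn)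
qed

lemma (in group) group_OutGroup: "group (OutGroup G)"
  unfolding OutGroup_def by (rule normal.factorgroup_is_group[OF normal_Inn])

lemma (in group) prime_divs_OutGroup_subset:
  "prime_divs (OutGroup G) \<subseteq> prime_divs (AutoGroup G)"
  unfolding OutGroup_def
  by (rule group.prime_divs_FactGroup_subset[OF AutoGroup subgroup_Inn])

theorem lemma1p19:
  fixes T :: "('c, 'd) monoid_scheme" and G :: "('a, 'b) monoid_scheme"
  assumes "simple_group T" and "finite (carrier T)" and "\<not> comm_group T"
    and "schur_multiplier_order T = 1 \<or> schur_multiplier_order T = 2"
    and "group G" and "finite (carrier G)"
    and "strictly_solvable_over T G"
    and "\<exists>a \<in> prime_divs T. \<exists>b \<in> prime_divs T. ngraph_edge G a b"
    and "N \<lhd> G" and "M \<lhd> G" and "N \<subseteq> M"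
    and "solvable (G\<lparr>carrier := N\<rparr>)"
    and "G\<lparr>carrier := M\<rparr> Mod N \<cong> T"
    and "\<exists>H. subgroup H (OutGroup T) \<and> G Mod M \<cong> (OutGroup T)\<lparr>carrier := H\<rparr>"
  shows "\<forall>s \<in> prime_divs T. \<forall>p \<in> prime_divs G - prime_divs (AutoGroup T).
           ngraph_edge G s p \<longrightarrow> ngraph_edge (G\<lparr>carrier := M\<rparr>) s p"
proof (intro ballI impI)
  fix s p
  assume s: "s \<in> prime_divs T" and p: "p \<in> prime_divs G - prime_divs (AutoGroup T)"
    and edge: "ngraph_edge G s p"
  interpret G: group G by fact
  interpret T: group T using \<open>simple_group T\<close> by (simp add: simple_group_def)
  have M: "subgroup M G" and N: "subgroup N G"
    using \<open>M \<lhd> G\<close> \<open>N \<lhd> G\<close> by (simp_all add: normal_def)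
  interpret M: group "G\<lparr>carrier := M\<rparr>" using G.subgroup_imp_group[OF M] .
  have "s \<in> prime_divs (G\<lparr>carrier := M\<rparr>)"
    using s prime_divs_iso[OF \<open>G\<lparr>carrier := M\<rparr> Mod N \<cong> T\<close>]
      M.prime_divs_FactGroup_subset[OF G.subgroup_incl[OF N M \<open>N \<subseteq> M\<close>]] by blast
  moreover have "p \<in> prime_divs (G\<lparr>carrier := M\<rparr>)"
  proof -
    obtain H where H: "subgroup H (OutGroup T)" and iso: "G Mod M \<cong> (OutGroup T)\<lparr>carrier := H\<rparr>"
      using assms(14) by blast
    have "prime_divs (G Mod M) \<subseteq> prime_divs (AutoGroup T)"
      using prime_divs_iso[OF iso] group.prime_divs_subgroup_subset[OF T.group_OutGroup H]
        T.prime_divs_OutGroup_subset by blast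
    then show ?thesis
      using p G.prime_divs_subset_subgroup_Un_FactGroup[OF M] by blast
  qed
  ultimately show "ngraph_edge (G\<lparr>carrier := M\<rparr>) s p"
    using G.ngraph_edge_subgroup[OF M edge] by blast
qed

end
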